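(* Let $A$ be an $n\times n$ and $B$ an $m\times m$ complex matrix, and for $k=1,\dots,m$ let $1\le i_k,j_k\le n$ and $\alpha_k,\beta_k\in\mathbb{C}$. Let $M$ be the $(n+m)\times(n+m)$ block matrix $M=\begin{bmatrix}A & [\alpha_1\mathbf{e}_{i_1},\dots,\alpha_m\mathbf{e}_{i_m}]\\ [\beta_1\mathbf{e}_{j_1},\dots,\beta_m\mathbf{e}_{j_m}]^T & B\end{bmatrix}$, where $\mathbf{e}_i$ is the $i$-th standard basis column vector of $\mathbb{C}^n$ (so the $k$-th column of the upper-right block is $\alpha_k\mathbf{e}_{i_k}$ and the $k$-th row of the lower-left block is $\beta_k\mathbf{e}_{j_k}^T$). Then $$\det(M)=\sum_{S,T}\varepsilon_{S,T}\,\alpha_T\beta_S\,B_{S,T}A_{S,T}$$ for some signs $\varepsilon_{S,T}\in\{\pm1\}$, where the sum is over all pairs $S,T\subseteq\{1,\dots,m\}$ with $|S|=|T|$.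
   Context: For $S,T\subseteq\{1,\dots,m\}$ with $|S|=|T|$: $B_{S,T}$ is the determinant of the matrix obtained from $B$ by deleting the rows indexed by $S$ and the columns indexed by $T$ (the determinant of the empty matrix being $1$). Let $J(S)=\{j_k: k\in S\}$ and $I(T)=\{i_k:k\in T\}$; $A_{S,T}$ is the determinant of the matrix obtained from $A$ by deleting the rows indexed by $I(T)$ and the columns indexed by $J(S)$ if $|I(T)|=|J(S)|=|T|=|S|$, and $A_{S,T}=0$ otherwise. Finally $\alpha_T=\prod_{k\in T}\alpha_k$ and $\beta_S=\prod_{k\in S}\beta_k$. *)

theory Defs
  imports "Jordan_Normal_Form.Determinant" "Jordan_Normal_Form.DL_Submatrix"
begin

text \<open>Indices are 0-based: rows/columns of A are 0..<n, of B are 0..<m, and k ranges over 0..<m.\<close>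

definition del_rows_cols :: "'a mat \<Rightarrow> nat set \<Rightarrow> nat set \<Rightarrow> 'a mat" where
  "del_rows_cols X R C = submatrix X (- R) (- C)"

definition upper_right_blk :: "nat \<Rightarrow> nat \<Rightarrow> (nat \<Rightarrow> nat) \<Rightarrow> (nat \<Rightarrow> complex) \<Rightarrow> complex mat" where
  "upper_right_blk n m i \<alpha> = mat n m (\<lambda>(r, k). if r = i k then \<alpha> k else 0)"

definition lower_left_blk :: "nat \<Rightarrow> nat \<Rightarrow> (nat \<Rightarrow> nat) \<Rightarrow> (nat \<Rightarrow> complex) \<Rightarrow> complex mat" where
  "lower_left_blk n m j \<beta> = mat m n (\<lambda>(k, c). if c = j k then \<beta> k else 0)"

definition blockM :: "complex mat \<Rightarrow> complex mat \<Rightarrow> (nat \<Rightarrow> nat) \<Rightarrow> (nat \<Rightarrow> nat)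
    \<Rightarrow> (nat \<Rightarrow> complex) \<Rightarrow> (nat \<Rightarrow> complex) \<Rightarrow> complex mat" where
  "blockM A B i j \<alpha> \<beta> = four_block_mat A (upper_right_blk (dim_row A) (dim_row B) i \<alpha>)
      (lower_left_blk (dim_row A) (dim_row B) j \<beta>) B"

definition B_minor :: "complex mat \<Rightarrow> nat set \<Rightarrow> nat set \<Rightarrow> complex" where
  "B_minor B S T = det (del_rows_cols B S T)"

definition A_minor :: "complex mat \<Rightarrow> (nat \<Rightarrow> nat) \<Rightarrow> (nat \<Rightarrow> nat) \<Rightarrow> nat set \<Rightarrow> nat set \<Rightarrow> complex" where
  "A_minor A i j S T =
     (if card (i ` T) = card T \<and> card (j ` S) = card S \<and> card T = card S
      then det (del_rows_cols A (i ` T) (j ` S)) else 0)"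

end

theory Submission
  imports Defs
begin

text \<open>
  Expand \<open>det M\<close> by the Leibniz formula and sort the permutations by the set \<open>S\<close> of rows of
  \<open>B\<close> that they send into the lower-left block and the set \<open>T\<close> of columns of \<open>B\<close> that they
  reach from the upper-right block. The terms belonging to \<open>(S, T)\<close> make up the determinant of
  the matrix \<open>M\<^sub>S\<^sub>T\<close> obtained from \<open>M\<close> by keeping only the \<open>\<alpha>\<close>-columns indexed by \<open>T\<close>,
  the \<open>\<beta>\<close>-rows indexed by \<open>S\<close>, and the entries of \<open>B\<close> outside the rows \<open>S\<close> and columns \<open>T\<close>.

  If \<open>|S| \<noteq> |T|\<close>, some set of rows of \<open>M\<^sub>S\<^sub>T\<close> is supported on fewer columns, so its
  determinant vanishes. Otherwise column \<open>n + k\<close> (\<open>k \<in> T\<close>) has the single nonzero entry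
  \<open>\<alpha>\<^sub>k\<close> in row \<open>i\<^sub>k\<close> and row \<open>n + k\<close> (\<open>k \<in> S\<close>) the single nonzero entry \<open>\<beta>\<^sub>k\<close> in column
  \<open>j\<^sub>k\<close>. Laplace expansion along all of them leaves, up to sign, \<open>\<alpha>\<^sub>T \<beta>\<^sub>S\<close> times a block
  lower-triangular minor with diagonal blocks \<open>A\<close> without rows \<open>I(T)\<close> and columns \<open>J(S)\<close>, and
  \<open>B\<close> without rows \<open>S\<close> and columns \<open>T\<close>. If \<open>i\<close> is not injective on \<open>T\<close> (or \<open>j\<close> on
  \<open>S\<close>), the expansion instead meets a zero column, matching \<open>A\<^sub>S\<^sub>T = 0\<close>.
\<close>

section \<open>Index sets\<close>

lemma pick_eqI:
  assumes "x \<in> I" "card {a\<in>I. a < x} = p"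
  shows "pick I p = x"
  using pick_card_in_set[OF assms(1)] assms(2) by simp

lemma pick_eq_iff:
  assumes "p < card I" "q < card I"
  shows "pick I p = pick I q \<longleftrightarrow> p = q"
  using pick_mono[of p I q] pick_mono[of q I p] assms by (cases p q rule: linorder_cases) auto

lemma pick_Diff_pick:
  assumes p: "p < card I" and a: "a < card I - 1"
  shows "pick (I - {pick I p}) a = pick I (if a < p then a else Suc a)"
proof -
  define a' where "a' = (if a < p then a else Suc a)"
  have a': "a' < card I" using a p unfolding a'_def by auto
  have ne: "pick I a' \<noteq> pick I p" using pick_eq_iff[OF a' p] unfolding a'_def by auto
  have "card {b \<in> I - {pick I p}. b < pick I a'} = a"
  proof (cases "a < p")
    case True
    then have "pick I a' < pick I p" unfolding a'_def using p by (intro pick_mono) auto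
    then have "{b \<in> I - {pick I p}. b < pick I a'} = {b \<in> I. b < pick I a'}" by auto
    then show ?thesis using card_pick[of a' I] a' True unfolding a'_def by auto
  next
    case False
    then have "pick I p < pick I a'" using a' unfolding a'_def by (intro pick_mono) auto
    then have "{b \<in> I - {pick I p}. b < pick I a'} = {b \<in> I. b < pick I a'} - {pick I p}"
      and "pick I p \<in> {b \<in> I. b < pick I a'}" using pick_in_set[of p I] p by auto
    then show ?thesis using card_pick[of a' I] a' False unfolding a'_def by auto
  qed
  then show ?thesis unfolding a'_def[symmetric]
    using pick_in_set[of a' I] a' ne by (intro pick_eqI) auto
qed

lemma pick_less_bound:
  assumes "I \<subseteq> {..<N}" "a < card I"
  shows "pick I a < N"
  using pick_in_set[of a I] assms by auto

lemma card_Un_shift: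
  fixes n :: nat
  assumes "L \<subseteq> {..<n}" "finite H"
  shows "card (L \<union> (+) n ` H) = card L + card H"
proof -
  have "finite L" using assms(1) finite_subset by blast
  moreover have "L \<inter> (+) n ` H = {}" using assms(1) by auto
  ultimately show ?thesis using assms(2) by (simp add: card_Un_disjoint card_image)
qed

lemma pick_Un_shift:
  assumes L: "L \<subseteq> {..<n}" and H: "finite H" and a: "a < card L + card H"
  shows "pick (L \<union> (+) n ` H) a = (if a < card L then pick L a else n + pick H (a - card L))"
proof (cases "a < card L")
  case True
  have "{x. x < n \<and> x \<in> L \<union> (+) n ` H} = L" using L by auto
  from pick_reduce_set[of a n "L \<union> (+) n ` H", unfolded this, OF True] True show ?thesis by simp
next
  case False
  define q where "q = a - card L"
  have q: "q < card H" and a_eq: "a = card L + q" using a False unfolding q_def by auto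
  have "pick (L \<union> (+) n ` H) (card L + q) = n + pick H q"
  proof (rule pick_eqI)
    show "n + pick H q \<in> L \<union> (+) n ` H" using pick_in_set[of q H] q by auto
    have "{x \<in> L \<union> (+) n ` H. x < n + pick H q} = L \<union> (+) n ` {x \<in> H. x < pick H q}" using L by auto
    then show "card {x \<in> L \<union> (+) n ` H. x < n + pick H q} = card L + q"
      using card_Un_shift[OF L, of "{x \<in> H. x < pick H q}"] card_pick[of q H] q H by simp
  qed
  then show ?thesis using False a_eq by simp
qed

lemma lessThan_add_Diff_shift:
  fixes n m :: nat
  assumes "F \<subseteq> {..<n}"
  shows "{..<n + m} - F - (+) n ` K = ({..<n} - F) \<union> (+) n ` ({..<m} - K)"
proof -
  have "x \<in> {..<n + m} - F - (+) n ` K \<longleftrightarrow> x \<in> ({..<n} - F) \<union> (+) n ` ({..<m} - K)" for x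
  proof (cases "x < n")
    case False
    then obtain k where "x = n + k" by (metis le_add_diff_inverse not_less)
    then show ?thesis using assms by auto
  qed auto
  then show ?thesis by blast
qed

section \<open>Submatrices\<close>

lemma submatrix_carrier_mat:
  assumes "X \<in> carrier_mat nr nc" "I \<subseteq> {..<nr}" "J \<subseteq> {..<nc}"
  shows "submatrix X I J \<in> carrier_mat (card I) (card J)"
proof -
  have r: "{a. a < dim_row X \<and> a \<in> I} = I" and c: "{a. a < dim_col X \<and> a \<in> J} = J"
    using assms by auto
  show ?thesis unfolding carrier_mat_def mem_Collect_eq dim_submatrix r c by simp
qed

lemma submatrix_index_subset:
  assumes "X \<in> carrier_mat nr nc" "I \<subseteq> {..<nr}" "J \<subseteq> {..<nc}" "a < card I" "b < card J"
  shows "submatrix X I J $$ (a, b) = X $$ (pick I a, pick J b)"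
proof -
  have r: "{a. a < dim_row X \<and> a \<in> I} = I" and c: "{a. a < dim_col X \<and> a \<in> J} = J"
    using assms by auto
  show ?thesis by (rule submatrix_index) (unfold r c, fact, fact)
qed

lemma submatrix_Int_dims:
  "submatrix X I J = submatrix X (I \<inter> {..<dim_row X}) (J \<inter> {..<dim_col X})"
proof -
  have r: "{a. a < dim_row X \<and> a \<in> I \<inter> {..<dim_row X}} = {a. a < dim_row X \<and> a \<in> I}"
   and c: "{a. a < dim_col X \<and> a \<in> J \<inter> {..<dim_col X}} = {a. a < dim_col X \<and> a \<in> J}" by auto
  show ?thesis
  proof (rule eq_matI)
    fix a b assume "a < dim_row (submatrix X (I \<inter> {..<dim_row X}) (J \<inter> {..<dim_col X}))"
      "b < dim_col (submatrix X (I \<inter> {..<dim_row X}) (J \<inter> {..<dim_col X}))"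
    then have a: "a < card {a. a < dim_row X \<and> a \<in> I}" and b: "b < card {a. a < dim_col X \<and> a \<in> J}"
      unfolding dim_submatrix r c .
    have "pick (I \<inter> {..<dim_row X}) a = pick I a"
      using pick_reduce_set[of a "dim_row X" "I \<inter> {..<dim_row X}", unfolded r, OF a]
        pick_reduce_set[OF a] by (simp only:)
    moreover have "pick (J \<inter> {..<dim_col X}) b = pick J b"
      using pick_reduce_set[of b "dim_col X" "J \<inter> {..<dim_col X}", unfolded c, OF b]
        pick_reduce_set[OF b] by (simp only:)
    moreover have "submatrix X (I \<inter> {..<dim_row X}) (J \<inter> {..<dim_col X}) $$ (a, b)
        = X $$ (pick (I \<inter> {..<dim_row X}) a, pick (J \<inter> {..<dim_col X}) b)"
      by (rule submatrix_index) (unfold r c, fact a, fact b)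
    ultimately show "submatrix X I J $$ (a, b) = submatrix X (I \<inter> {..<dim_row X}) (J \<inter> {..<dim_col X}) $$ (a, b)"
      using submatrix_index[OF a b] by simp
  qed (simp_all only: dim_submatrix r c)
qed

lemma submatrix_lessThan_dims: "submatrix X {..<dim_row X} {..<dim_col X} = X"
proof -
  have "submatrix X {..<dim_row X} {..<dim_col X} = submatrix X UNIV UNIV"
    using submatrix_Int_dims[of X UNIV UNIV] by simp
  also have "\<dots> = X"
    by (rule eq_matI) (simp_all add: submatrix_def pick_UNIV)
  finally show ?thesis .
qed

lemma submatrix_cong:
  assumes X: "X \<in> carrier_mat nr nc" and Y: "Y \<in> carrier_mat nr nc"
    and I: "I \<subseteq> {..<nr}" and J: "J \<subseteq> {..<nc}"
    and eq: "\<And>r c. r \<in> I \<Longrightarrow> c \<in> J \<Longrightarrow> X $$ (r, c) = Y $$ (r, c)"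
  shows "submatrix X I J = submatrix Y I J"
proof (rule eq_matI)
  fix a b assume "a < dim_row (submatrix Y I J)" "b < dim_col (submatrix Y I J)"
  then have "a < card I" "b < card J" using submatrix_carrier_mat[OF Y I J] by auto
  then show "submatrix X I J $$ (a, b) = submatrix Y I J $$ (a, b)"
    using eq[OF pick_in_set pick_in_set]
    by (simp add: submatrix_index_subset[OF X I J] submatrix_index_subset[OF Y I J])
qed (use submatrix_carrier_mat[OF X I J] submatrix_carrier_mat[OF Y I J] in auto)

lemma submatrix_zero_mat:
  assumes I: "I \<subseteq> {..<nr}" and J: "J \<subseteq> {..<nc}"
  shows "submatrix (0\<^sub>m nr nc) I J = 0\<^sub>m (card I) (card J)"
proof (rule eq_matI)
  fix a b assume "a < dim_row (0\<^sub>m (card I) (card J))" "b < dim_col (0\<^sub>m (card I) (card J))"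
  then have "a < card I" "b < card J" by auto
  then show "submatrix (0\<^sub>m nr nc) I J $$ (a, b) = 0\<^sub>m (card I) (card J) $$ (a, b)"
    using pick_less_bound[OF I] pick_less_bound[OF J]
    by (simp add: submatrix_index_subset[OF zero_carrier_mat I J])
qed (use submatrix_carrier_mat[OF zero_carrier_mat I J] in auto)

lemma transpose_submatrix: "transpose_mat (submatrix X I J) = submatrix (transpose_mat X) J I"
  by (rule eq_matI) (auto simp: dim_submatrix submatrix_def pick_le)

lemma mat_delete_submatrix:
  assumes X: "X \<in> carrier_mat nr nc" and I: "I \<subseteq> {..<nr}" and J: "J \<subseteq> {..<nc}"
    and p: "p < card I" and q: "q < card J"
  shows "mat_delete (submatrix X I J) p q = submatrix X (I - {pick I p}) (J - {pick J q})"
proof -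
  have I': "I - {pick I p} \<subseteq> {..<nr}" and J': "J - {pick J q} \<subseteq> {..<nc}" using I J by auto
  have cI: "card (I - {pick I p}) = card I - 1" using pick_in_set[of p I] p by (simp add: card_Diff_singleton_if)
  have cJ: "card (J - {pick J q}) = card J - 1" using pick_in_set[of q J] q by (simp add: card_Diff_singleton_if)
  show ?thesis
  proof (rule eq_matI)
    fix a b assume "a < dim_row (submatrix X (I - {pick I p}) (J - {pick J q}))"
      "b < dim_col (submatrix X (I - {pick I p}) (J - {pick J q}))"
    then have a: "a < card I - 1" and b: "b < card J - 1"
      using submatrix_carrier_mat[OF X I' J'] cI cJ by auto
    have "mat_delete (submatrix X I J) p q $$ (a, b)
        = submatrix X I J $$ (if a < p then a else Suc a, if b < q then b else Suc b)"
      using submatrix_carrier_mat[OF X I J] a b unfolding mat_delete_def by auto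
    also have "\<dots> = X $$ (pick (I - {pick I p}) a, pick (J - {pick J q}) b)"
      using a b by (simp add: submatrix_index_subset[OF X I J] pick_Diff_pick[OF p] pick_Diff_pick[OF q])
    also have "\<dots> = submatrix X (I - {pick I p}) (J - {pick J q}) $$ (a, b)"
      using a b cI cJ by (simp add: submatrix_index_subset[OF X I' J'])
    finally show "mat_delete (submatrix X I J) p q $$ (a, b) = submatrix X (I - {pick I p}) (J - {pick J q}) $$ (a, b)" .
  qed (use submatrix_carrier_mat[OF X I J] submatrix_carrier_mat[OF X I' J'] cI cJ in auto)
qed

lemma submatrix_four_block_mat:
  assumes A: "A \<in> carrier_mat nr1 nc1" and B: "B \<in> carrier_mat nr1 nc2"
    and C: "C \<in> carrier_mat nr2 nc1" and D: "D \<in> carrier_mat nr2 nc2"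
    and L: "L \<subseteq> {..<nr1}" and L': "L' \<subseteq> {..<nc1}" and H: "H \<subseteq> {..<nr2}" and H': "H' \<subseteq> {..<nc2}"
  shows "submatrix (four_block_mat A B C D) (L \<union> (+) nr1 ` H) (L' \<union> (+) nc1 ` H')
    = four_block_mat (submatrix A L L') (submatrix B L H') (submatrix C H L') (submatrix D H H')"
    (is "submatrix ?X ?I ?J = four_block_mat ?A ?B ?C ?D")
proof -
  have fin: "finite H" "finite H'" using H H' finite_subset by auto
  have X: "?X \<in> carrier_mat (nr1 + nr2) (nc1 + nc2)" using A D by simp
  have I: "?I \<subseteq> {..<nr1 + nr2}" and J: "?J \<subseteq> {..<nc1 + nc2}" using L L' H H' by auto
  have cI: "card ?I = card L + card H" and cJ: "card ?J = card L' + card H'"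
    using card_Un_shift[OF L fin(1)] card_Un_shift[OF L' fin(2)] .
  have subs: "?A \<in> carrier_mat (card L) (card L')" "?B \<in> carrier_mat (card L) (card H')"
    "?C \<in> carrier_mat (card H) (card L')" "?D \<in> carrier_mat (card H) (card H')"
    using submatrix_carrier_mat A B C D L L' H H' by blast+
  show ?thesis
  proof (rule eq_matI)
    fix a b assume "a < dim_row (four_block_mat ?A ?B ?C ?D)" "b < dim_col (four_block_mat ?A ?B ?C ?D)"
    then have a: "a < card L + card H" and b: "b < card L' + card H'" using subs by auto
    have bounds: "a < card L \<Longrightarrow> pick L a < nr1" "\<not> a < card L \<Longrightarrow> pick H (a - card L) < nr2"
      "b < card L' \<Longrightarrow> pick L' b < nc1" "\<not> b < card L' \<Longrightarrow> pick H' (b - card L') < nc2"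
      using a b by (auto intro!: pick_less_bound[OF L] pick_less_bound[OF H]
        pick_less_bound[OF L'] pick_less_bound[OF H'])
    have "submatrix ?X ?I ?J $$ (a, b) = ?X $$ (pick ?I a, pick ?J b)"
      using a b cI cJ by (simp add: submatrix_index_subset[OF X I J])
    also have "\<dots> = four_block_mat ?A ?B ?C ?D $$ (a, b)"
      using a b A D subs bounds
      by (cases "a < card L"; cases "b < card L'")
        (simp_all add: pick_Un_shift[OF L fin(1) a] pick_Un_shift[OF L' fin(2) b]
          submatrix_index_subset[OF A L L'] submatrix_index_subset[OF B L H']
          submatrix_index_subset[OF C H L'] submatrix_index_subset[OF D H H'])
    finally show "submatrix ?X ?I ?J $$ (a, b) = four_block_mat ?A ?B ?C ?D $$ (a, b)" .
  qed (use submatrix_carrier_mat[OF X I J] cI cJ subs in auto)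
qed

section \<open>Determinants of submatrices\<close>

lemma det_non_square:
  assumes "X \<in> carrier_mat nr nc" "nr \<noteq> nc"
  shows "det X = 0"
  using assms unfolding det_def by auto

lemma det_submatrix_transpose:
  fixes X :: "'a::comm_ring_1 mat"
  assumes X: "X \<in> carrier_mat N N" and I: "I \<subseteq> {..<N}" and J: "J \<subseteq> {..<N}"
  shows "det (submatrix (transpose_mat X) J I) = det (submatrix X I J)"
proof (cases "card I = card J")
  case True
  then show ?thesis
    using submatrix_carrier_mat[OF X I J] det_transpose transpose_submatrix by metis
next
  case False
  have "submatrix (transpose_mat X) J I \<in> carrier_mat (card J) (card I)"
    using X I J by (intro submatrix_carrier_mat) auto
  then show ?thesis
    using False det_non_square submatrix_carrier_mat[OF X I J] by metis
qed

lemma det_submatrix_expand_col: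
  fixes X :: "'a::comm_ring_1 mat"
  assumes X: "X \<in> carrier_mat N N" and I: "I \<subseteq> {..<N}" and J: "J \<subseteq> {..<N}"
    and r: "r \<in> I" and c: "c \<in> J" and zero: "\<And>r'. r' \<in> I \<Longrightarrow> r' \<noteq> r \<Longrightarrow> X $$ (r', c) = 0"
  shows "\<exists>e \<in> {1, -1}. det (submatrix X I J) = e * X $$ (r, c) * det (submatrix X (I - {r}) (J - {c}))"
proof (cases "card I = card J")
  case False
  have "finite I" "finite J" using I J finite_subset by auto
  then have "card I \<noteq> 0" "card J \<noteq> 0" using r c by auto
  then have "card (I - {r}) \<noteq> card (J - {c})"
    using False r c by (auto simp: card_Diff_singleton)
  moreover have "I - {r} \<subseteq> {..<N}" "J - {c} \<subseteq> {..<N}" using I J by auto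
  ultimately have "det (submatrix X (I - {r}) (J - {c})) = 0"
    using det_non_square submatrix_carrier_mat[OF X] by blast
  moreover have "det (submatrix X I J) = 0"
    using det_non_square[OF submatrix_carrier_mat[OF X I J] False] .
  ultimately show ?thesis by (intro bexI[of _ 1]) simp_all
next
  case True
  define K where "K = card I"
  define p where "p = card {a\<in>I. a < r}"
  define q where "q = card {b\<in>J. b < c}"
  define Y where "Y = submatrix X I J"
  have fin: "finite I" "finite J" using I J finite_subset by auto
  have Y: "Y \<in> carrier_mat K K" unfolding Y_def K_def using submatrix_carrier_mat[OF X I J] True by simp
  have p: "p < K" unfolding p_def K_def using r fin by (intro psubset_card_mono) auto
  have q: "q < card J" unfolding q_def using c fin by (intro psubset_card_mono) auto
  have pick_p: "pick I p = r" unfolding p_def using pick_card_in_set[OF r] .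
  have pick_q: "pick J q = c" unfolding q_def using pick_card_in_set[OF c] .
  have col_q: "Y $$ (a, q) = (if a = p then X $$ (r, c) else 0)" if "a < K" for a
  proof -
    have "Y $$ (a, q) = X $$ (pick I a, c)"
      unfolding Y_def using that q pick_q by (simp add: K_def submatrix_index_subset[OF X I J])
    moreover have "pick I a \<in> I" "pick I a = r \<longleftrightarrow> a = p"
      using that p pick_p pick_in_set[of a I] pick_eq_iff[of a I p] by (auto simp: K_def)
    ultimately show ?thesis using zero by auto
  qed
  have "det Y = (\<Sum>a<K. Y $$ (a, q) * cofactor Y a q)"
    using laplace_expansion_column[OF Y] q True by (simp add: K_def)
  also have "\<dots> = (\<Sum>a<K. if a = p then X $$ (r, c) * cofactor Y p q else 0)"
    by (rule sum.cong) (simp_all add: col_q)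
  also have "\<dots> = X $$ (r, c) * cofactor Y p q"
    using p by simp
  also have "cofactor Y p q = (-1) ^ (p + q) * det (submatrix X (I - {r}) (J - {c}))"
    unfolding cofactor_def Y_def using mat_delete_submatrix[OF X I J, of p q] p q pick_p pick_q
    by (simp add: K_def True)
  finally have "det (submatrix X I J) = (-1) ^ (p + q) * X $$ (r, c) * det (submatrix X (I - {r}) (J - {c}))"
    unfolding Y_def by (simp add: ac_simps)
  moreover have "(-1::'a) ^ (p + q) \<in> {1, -1}" by (cases "even (p + q)") auto
  ultimately show ?thesis by (rule bexI[of _ "(-1) ^ (p + q)"])
qed

lemma det_submatrix_zero_col:
  fixes X :: "'a::comm_ring_1 mat"
  assumes X: "X \<in> carrier_mat N N" and I: "I \<subseteq> {..<N}" and J: "J \<subseteq> {..<N}"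
    and c: "c \<in> J" and zero: "\<And>r. r \<in> I \<Longrightarrow> X $$ (r, c) = 0"
  shows "det (submatrix X I J) = 0"
proof (cases "I = {}")
  case True
  have "finite J" using J finite_subset by blast
  then have "card J \<noteq> 0" using c by auto
  then show ?thesis using True det_non_square[OF submatrix_carrier_mat[OF X I J]] by simp
next
  case False
  then obtain r where r: "r \<in> I" by blast
  obtain e where "det (submatrix X I J) = e * X $$ (r, c) * det (submatrix X (I - {r}) (J - {c}))"
    using det_submatrix_expand_col[OF X I J r c] zero by blast
  then show ?thesis using zero[OF r] by simp
qed

lemma det_submatrix_eliminate_cols:
  fixes X :: "'a::comm_ring_1 mat"
  assumes X: "X \<in> carrier_mat N N" and I: "I \<subseteq> {..<N}" and J: "J \<subseteq> {..<N}"
    and K: "finite K" "\<rho> ` K \<subseteq> I" "\<gamma> ` K \<subseteq> J" "inj_on \<gamma> K"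
    and zero: "\<And>k r. k \<in> K \<Longrightarrow> r < N \<Longrightarrow> r \<noteq> \<rho> k \<Longrightarrow> X $$ (r, \<gamma> k) = 0"
  shows "\<exists>e \<in> {1, -1}. det (submatrix X I J) = e * (if inj_on \<rho> K
    then (\<Prod>k\<in>K. X $$ (\<rho> k, \<gamma> k)) * det (submatrix X (I - \<rho> ` K) (J - \<gamma> ` K)) else 0)"
  using K zero
proof (induction K rule: finite_induct)
  case empty
  then show ?case by auto
next
  case (insert x F)
  have "\<exists>e \<in> {1, -1}. det (submatrix X I J) = e * (if inj_on \<rho> F
      then (\<Prod>k\<in>F. X $$ (\<rho> k, \<gamma> k)) * det (submatrix X (I - \<rho> ` F) (J - \<gamma> ` F)) else 0)"
    by (rule insert.IH) (use insert.prems in auto)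
  then obtain e where e: "e \<in> {1, -1}" and det_F: "det (submatrix X I J) = e * (if inj_on \<rho> F
      then (\<Prod>k\<in>F. X $$ (\<rho> k, \<gamma> k)) * det (submatrix X (I - \<rho> ` F) (J - \<gamma> ` F)) else 0)"
    by blast
  define I' where "I' = I - \<rho> ` F"
  define J' where "J' = J - \<gamma> ` F"
  have I': "I' \<subseteq> {..<N}" and J': "J' \<subseteq> {..<N}" using I J unfolding I'_def J'_def by auto
  have col_x: "\<gamma> x \<in> J'" using insert unfolding J'_def by (auto simp: inj_on_def)
  have zero_x: "X $$ (r, \<gamma> x) = 0" if "r \<in> I'" "r \<noteq> \<rho> x" for r
    using insert.prems(4)[of x r] that I' by auto
  show ?case
  proof (cases "inj_on \<rho> F \<and> \<rho> x \<notin> \<rho> ` F")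
    case False
    \<comment> \<open>either already \<open>\<rho>\<close> is not injective on \<open>F\<close>, or the only row where column \<open>\<gamma> x\<close>
      may be nonzero has been deleted\<close>
    then have "\<not> inj_on \<rho> F \<or> det (submatrix X I' J') = 0"
      using det_submatrix_zero_col[OF X I' J' col_x] zero_x unfolding I'_def by auto
    then show ?thesis using False e det_F insert.hyps unfolding I'_def J'_def by auto
  next
    case True
    then have row_x: "\<rho> x \<in> I'" using insert.prems(1) unfolding I'_def by auto
    obtain e' where e': "e' \<in> {1, -1}" and det_F': "det (submatrix X I' J')
        = e' * X $$ (\<rho> x, \<gamma> x) * det (submatrix X (I' - {\<rho> x}) (J' - {\<gamma> x}))"
      using det_submatrix_expand_col[OF X I' J' row_x col_x zero_x] by blast
    have "I' - {\<rho> x} = I - \<rho> ` insert x F" "J' - {\<gamma> x} = J - \<gamma> ` insert x F"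
      unfolding I'_def J'_def by auto
    then have "det (submatrix X I J) = (e * e') * ((\<Prod>k\<in>insert x F. X $$ (\<rho> k, \<gamma> k))
        * det (submatrix X (I - \<rho> ` insert x F) (J - \<gamma> ` insert x F)))"
      using det_F det_F' True insert.hyps unfolding I'_def[symmetric] J'_def[symmetric]
      by (simp add: ac_simps)
    moreover have "e * e' \<in> {1, -1}" using e e' by auto
    ultimately show ?thesis using True insert.hyps by (intro bexI[of _ "e * e'"]) auto
  qed
qed

lemma det_submatrix_eliminate_rows:
  fixes X :: "'a::comm_ring_1 mat"
  assumes X: "X \<in> carrier_mat N N" and I: "I \<subseteq> {..<N}" and J: "J \<subseteq> {..<N}"
    and K: "finite K" "\<rho> ` K \<subseteq> I" "\<gamma> ` K \<subseteq> J" "inj_on \<rho> K"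
    and zero: "\<And>k c. k \<in> K \<Longrightarrow> c < N \<Longrightarrow> c \<noteq> \<gamma> k \<Longrightarrow> X $$ (\<rho> k, c) = 0"
  shows "\<exists>e \<in> {1, -1}. det (submatrix X I J) = e * (if inj_on \<gamma> K
    then (\<Prod>k\<in>K. X $$ (\<rho> k, \<gamma> k)) * det (submatrix X (I - \<rho> ` K) (J - \<gamma> ` K)) else 0)"
proof -
  have XT: "transpose_mat X \<in> carrier_mat N N" using X by auto
  have bounds: "\<rho> k < N" "\<gamma> k < N" if "k \<in> K" for k using that K(2,3) I J by auto
  have "\<exists>e \<in> {1, -1}. det (submatrix (transpose_mat X) J I) = e * (if inj_on \<gamma> K
      then (\<Prod>k\<in>K. transpose_mat X $$ (\<gamma> k, \<rho> k))
        * det (submatrix (transpose_mat X) (J - \<gamma> ` K) (I - \<rho> ` K)) else 0)"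
    using X bounds zero by (intro det_submatrix_eliminate_cols[OF XT J I K(1,3,2,4)]) auto
  moreover have "(\<Prod>k\<in>K. transpose_mat X $$ (\<gamma> k, \<rho> k)) = (\<Prod>k\<in>K. X $$ (\<rho> k, \<gamma> k))"
    using X bounds by (intro prod.cong) auto
  moreover have "I - \<rho> ` K \<subseteq> {..<N}" "J - \<gamma> ` K \<subseteq> {..<N}" using I J by auto
  ultimately show ?thesis
    by (simp only: det_submatrix_transpose[OF X I J] det_submatrix_transpose[OF X])
qed

lemma det_eq_0_if_rows_in_fewer_cols:
  fixes X :: "'a::comm_ring_1 mat"
  assumes X: "X \<in> carrier_mat N N" and R: "R \<subseteq> {..<N}" and C: "finite C" "card C < card R"
    and zero: "\<And>r c. r \<in> R \<Longrightarrow> c < N \<Longrightarrow> c \<notin> C \<Longrightarrow> X $$ (r, c) = 0"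
  shows "det X = 0"
  unfolding det_def'[OF X]
proof (rule sum.neutral, intro ballI)
  fix \<sigma> assume "\<sigma> \<in> {\<sigma>. \<sigma> permutes {0..<N}}"
  then have \<sigma>: "\<sigma> permutes {0..<N}" by simp
  have "card (\<sigma> ` R) = card R" using permutes_inj[OF \<sigma>] by (simp add: card_image inj_on_subset)
  then have "\<not> \<sigma> ` R \<subseteq> C" using card_mono[OF C(1), of "\<sigma> ` R"] C(2) by auto
  then obtain r where r: "r \<in> R" "\<sigma> r \<notin> C" by auto
  have "r < N" "\<sigma> r < N" using r R permutes_in_image[OF \<sigma>] by auto
  then have "X $$ (r, \<sigma> r) = 0" using zero r by blast
  then have "(\<Prod>a = 0..<N. X $$ (a, \<sigma> a)) = 0" using \<open>r < N\<close> by (intro prod_zero bexI[of _ r]) auto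
  then show "signof \<sigma> * (\<Prod>a = 0..<N. X $$ (a, \<sigma> a)) = 0" by simp
qed

section \<open>The bordered block matrix\<close>

lemma del_rows_cols_eq_submatrix:
  assumes "X \<in> carrier_mat nr nc"
  shows "del_rows_cols X R C = submatrix X ({..<nr} - R) ({..<nc} - C)"
proof -
  have "- R \<inter> {..<nr} = {..<nr} - R" "- C \<inter> {..<nc} = {..<nc} - C" by auto
  then show ?thesis
    using assms submatrix_Int_dims[of X "- R" "- C"] unfolding del_rows_cols_def by simp
qed

lemma A_minor_eq:
  assumes A: "A \<in> carrier_mat n n" and fin: "finite S" "finite T" and card: "card S = card T"
  shows "A_minor A i j S T
    = (if inj_on i T \<and> inj_on j S then det (submatrix A ({..<n} - i ` T) ({..<n} - j ` S)) else 0)"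
  using fin card del_rows_cols_eq_submatrix[OF A] inj_on_iff_eq_card[of T i] inj_on_iff_eq_card[of S j]
  unfolding A_minor_def by auto

lemma blockM_four_block_mat:
  assumes "A \<in> carrier_mat n n" "B \<in> carrier_mat m m"
  shows "blockM A B i j \<alpha> \<beta> = four_block_mat A (upper_right_blk n m i \<alpha>) (lower_left_blk n m j \<beta>) B"
  using assms unfolding blockM_def by auto

lemma index_blockM:
  assumes "A \<in> carrier_mat n n" "B \<in> carrier_mat m m" "p < n + m" "q < n + m"
  shows "blockM A B i j \<alpha> \<beta> $$ (p, q) =
    (if p < n then if q < n then A $$ (p, q) else if p = i (q - n) then \<alpha> (q - n) else 0
     else if q < n then if q = j (p - n) then \<beta> (p - n) else 0 else B $$ (p - n, q - n))"
  using assms by (simp add: blockM_def upper_right_blk_def lower_left_blk_def)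

lemma blockM_carrier_mat:
  assumes "A \<in> carrier_mat n n" "B \<in> carrier_mat m m"
  shows "blockM A B i j \<alpha> \<beta> \<in> carrier_mat (n + m) (n + m)"
  using assms by (simp add: blockM_def)

context
  fixes A B :: "complex mat" and n m :: nat and i j :: "nat \<Rightarrow> nat" and \<alpha> \<beta> :: "nat \<Rightarrow> complex"
  assumes A: "A \<in> carrier_mat n n" and B: "B \<in> carrier_mat m m"
    and ij: "\<forall>k<m. i k < n \<and> j k < n"
begin

definition blockM_part :: "nat set \<Rightarrow> nat set \<Rightarrow> complex mat" where
  "blockM_part S T = blockM A (mat m m (\<lambda>(k, l). if k \<notin> S \<and> l \<notin> T then B $$ (k, l) else 0)) i j
     (\<lambda>k. if k \<in> T then \<alpha> k else 0) (\<lambda>k. if k \<in> S then \<beta> k else 0)"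

definition lower_left_rows :: "(nat \<Rightarrow> nat) \<Rightarrow> nat set" where
  "lower_left_rows \<sigma> = {k. k < m \<and> \<sigma> (n + k) < n}"

definition upper_right_cols :: "(nat \<Rightarrow> nat) \<Rightarrow> nat set" where
  "upper_right_cols \<sigma> = {k. k < m \<and> (\<exists>p<n. \<sigma> p = n + k)}"

lemma blockM_part_carrier_mat: "blockM_part S T \<in> carrier_mat (n + m) (n + m)"
  unfolding blockM_part_def using A by (intro blockM_carrier_mat) auto

lemma index_blockM_part:
  assumes "p < n + m" "q < n + m"
  shows "blockM_part S T $$ (p, q) =
    (if (p < n \<and> n \<le> q \<and> q - n \<notin> T) \<or> (n \<le> p \<and> q < n \<and> p - n \<notin> S)
        \<or> (n \<le> p \<and> n \<le> q \<and> (p - n \<in> S \<or> q - n \<in> T))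
     then 0 else blockM A B i j \<alpha> \<beta> $$ (p, q))"
  using assms unfolding blockM_part_def
  by (cases "p < n"; cases "q < n") (simp_all add: index_blockM[OF A B] index_blockM[OF A mat_carrier])

lemma prod_blockM_part:
  assumes \<sigma>: "\<sigma> permutes {0..<n + m}" and S: "S \<subseteq> {..<m}" and T: "T \<subseteq> {..<m}"
  shows "(\<Prod>p = 0..<n + m. blockM_part S T $$ (p, \<sigma> p)) =
    (if S = lower_left_rows \<sigma> \<and> T = upper_right_cols \<sigma>
     then (\<Prod>p = 0..<n + m. blockM A B i j \<alpha> \<beta> $$ (p, \<sigma> p)) else 0)"
proof -
  have \<sigma>_less: "\<sigma> p < n + m" if "p < n + m" for p
    using permutes_in_image[OF \<sigma>] that by auto
  have \<sigma>_inj: "\<sigma> p = \<sigma> q \<longleftrightarrow> p = q" for p q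
    using permutes_inj[OF \<sigma>] by (auto simp: inj_def)
  show ?thesis
  proof (cases "S = lower_left_rows \<sigma> \<and> T = upper_right_cols \<sigma>")
    case True
    have "blockM_part S T $$ (p, \<sigma> p) = blockM A B i j \<alpha> \<beta> $$ (p, \<sigma> p)" if "p < n + m" for p
      using that \<sigma>_less[OF that] True \<sigma>_inj
      by (subst index_blockM_part) (auto simp: lower_left_rows_def upper_right_cols_def)
    then have "(\<Prod>p = 0..<n + m. blockM_part S T $$ (p, \<sigma> p))
        = (\<Prod>p = 0..<n + m. blockM A B i j \<alpha> \<beta> $$ (p, \<sigma> p))"
      by (intro prod.cong) auto
    then show ?thesis using True by simp
  next
    case False
    have "\<exists>p<n + m. blockM_part S T $$ (p, \<sigma> p) = 0"
    proof (cases "S = lower_left_rows \<sigma>")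
      case False
      then obtain k where k: "k < m" "k \<in> S \<longleftrightarrow> \<not> \<sigma> (n + k) < n"
        using S unfolding lower_left_rows_def by auto
      then show ?thesis
        using \<sigma>_less[of "n + k"] by (intro exI[of _ "n + k"]) (auto simp: index_blockM_part)
    next
      case True
      with False obtain k where k: "k < m" "k \<in> T \<longleftrightarrow> \<not> (\<exists>p<n. \<sigma> p = n + k)"
        using T unfolding upper_right_cols_def by auto
      define p where "p = Hilbert_Choice.inv \<sigma> (n + k)"
      have p: "p < n + m" "\<sigma> p = n + k"
        using k(1) permutes_inverses(1)[OF \<sigma>] permutes_in_image[OF permutes_inv[OF \<sigma>]]
        unfolding p_def by auto
      moreover have "(\<exists>p'<n. \<sigma> p' = n + k) \<longleftrightarrow> p < n"
        using p(2)[symmetric] \<sigma>_inj by auto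
      ultimately show ?thesis
        using k by (intro exI[of _ p]) (auto simp: index_blockM_part not_less)
    qed
    then show ?thesis using False by (auto intro: prod_zero)
  qed
qed

lemma det_blockM_eq_sum_parts:
  "det (blockM A B i j \<alpha> \<beta>) = (\<Sum>(S, T) \<in> Pow {..<m} \<times> Pow {..<m}. det (blockM_part S T))"
proof -
  let ?P = "{\<sigma>. \<sigma> permutes {0..<n + m}}"
  let ?Q = "Pow {..<m} \<times> Pow {..<m}"
  let ?term = "\<lambda>\<sigma>. signof \<sigma> * (\<Prod>p = 0..<n + m. blockM A B i j \<alpha> \<beta> $$ (p, \<sigma> p))"
  have "(\<Sum>(S, T) \<in> ?Q. det (blockM_part S T))
      = (\<Sum>ST \<in> ?Q. \<Sum>\<sigma> \<in> ?P. if ST = (lower_left_rows \<sigma>, upper_right_cols \<sigma>) then ?term \<sigma> else 0)"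
    by (intro sum.cong refl)
      (auto simp: det_def'[OF blockM_part_carrier_mat] prod_blockM_part intro!: sum.cong)
  also have "\<dots> = (\<Sum>\<sigma> \<in> ?P. \<Sum>ST \<in> ?Q. if ST = (lower_left_rows \<sigma>, upper_right_cols \<sigma>) then ?term \<sigma> else 0)"
    by (rule sum.swap)
  also have "\<dots> = (\<Sum>\<sigma> \<in> ?P. ?term \<sigma>)"
    by (intro sum.cong refl) (auto simp: lower_left_rows_def upper_right_cols_def)
  also have "\<dots> = det (blockM A B i j \<alpha> \<beta>)"
    using det_def'[OF blockM_carrier_mat[OF A B]] by simp
  finally show ?thesis ..
qed

lemma det_blockM_part_eq_0:
  assumes S: "S \<subseteq> {..<m}" and T: "T \<subseteq> {..<m}" and card: "card S \<noteq> card T"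
  shows "det (blockM_part S T) = 0"
proof -
  have fin: "finite S" "finite T" using S T finite_subset by auto
  have shifted: "c < n \<or> c - n \<in> X" if "c < n + m" "c \<notin> (+) n ` ({..<m} - X)" for c X
  proof (cases "c < n")
    case False
    then have "c = n + (c - n)" "c - n < m" using that(1) by auto
    then show ?thesis using that(2) by (metis DiffI image_eqI lessThan_iff)
  qed simp
  consider (fewer_S) "card S < card T" | (fewer_T) "card T < card S" using card by linarith
  then show ?thesis
  proof cases
    case fewer_S
    have card_shifted: "card ((+) n ` ({..<m} - X)) = m - card X" if "X \<subseteq> {..<m}" for X
      using card_image[OF inj_on_add, of n "{..<m} - X"]
        card_Diff_subset[OF finite_subset[OF that finite_lessThan] that]
      by (simp only: card_lessThan)
    show ?thesis
    proof (rule det_eq_0_if_rows_in_fewer_cols[OF blockM_part_carrier_mat])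
      show "(+) n ` ({..<m} - S) \<subseteq> {..<n + m}" by auto
      show "card ((+) n ` ({..<m} - T)) < card ((+) n ` ({..<m} - S))"
        using card_shifted[OF S] card_shifted[OF T] fewer_S card_mono[OF _ T] by simp
      fix r c assume r: "r \<in> (+) n ` ({..<m} - S)" and c: "c < n + m" "c \<notin> (+) n ` ({..<m} - T)"
      then obtain k where "r = n + k" "k < m" "k \<notin> S" by auto
      then show "blockM_part S T $$ (r, c) = 0"
        using shifted[OF c] c by (auto simp: index_blockM_part)
    qed simp
  next
    case fewer_T
    show ?thesis
    proof (rule det_eq_0_if_rows_in_fewer_cols[OF blockM_part_carrier_mat])
      show "{..<n} \<union> (+) n ` S \<subseteq> {..<n + m}" using S by auto
      show "card ({..<n} \<union> (+) n ` T) < card ({..<n} \<union> (+) n ` S)"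
        using fewer_T fin card_Un_shift[of "{..<n}" n] by simp
      fix r c assume r: "r \<in> {..<n} \<union> (+) n ` S" and c: "c < n + m" "c \<notin> {..<n} \<union> (+) n ` T"
      have "n \<le> c" using c by auto
      moreover have "c - n \<notin> T" using c \<open>n \<le> c\<close> by (metis UnI2 image_eqI le_add_diff_inverse)
      ultimately show "blockM_part S T $$ (r, c) = 0"
        using r c S by (auto simp: index_blockM_part)
    qed (simp add: fin)
  qed
qed

lemma det_blockM_part_remainder:
  assumes S: "S \<subseteq> {..<m}" and T: "T \<subseteq> {..<m}" and card: "card S = card T"
    and inj: "inj_on i T" "inj_on j S"
  shows "det (submatrix (blockM_part S T) (({..<n} - i ` T) \<union> (+) n ` ({..<m} - S))
      (({..<n} - j ` S) \<union> (+) n ` ({..<m} - T)))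
    = det (submatrix A ({..<n} - i ` T) ({..<n} - j ` S)) * det (submatrix B ({..<m} - S) ({..<m} - T))"
    (is "det (submatrix _ (?L \<union> _ ` ?H) (?L' \<union> _ ` ?H')) = _")
proof -
  let ?UR = "upper_right_blk n m i (\<lambda>k. if k \<in> T then \<alpha> k else 0)"
  let ?LL = "lower_left_blk n m j (\<lambda>k. if k \<in> S then \<beta> k else 0)"
  let ?B = "mat m m (\<lambda>(k, l). if k \<notin> S \<and> l \<notin> T then B $$ (k, l) else 0)"
  have fin: "finite S" "finite T" using S T finite_subset by auto
  have sub: "?L \<subseteq> {..<n}" "?L' \<subseteq> {..<n}" "?H \<subseteq> {..<m}" "?H' \<subseteq> {..<m}" by auto
  have "submatrix (blockM_part S T) (?L \<union> (+) n ` ?H) (?L' \<union> (+) n ` ?H')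
      = four_block_mat (submatrix A ?L ?L') (submatrix ?UR ?L ?H') (submatrix ?LL ?H ?L') (submatrix ?B ?H ?H')"
    unfolding blockM_part_def blockM_four_block_mat[OF A mat_carrier]
    by (intro submatrix_four_block_mat sub A) (auto simp: upper_right_blk_def lower_left_blk_def)
  also have "submatrix ?UR ?L ?H' = 0\<^sub>m (card ?L) (card ?H')"
    using submatrix_cong[of ?UR n m "0\<^sub>m n m" ?L ?H'] submatrix_zero_mat[OF sub(1,4)]
    by (auto simp: upper_right_blk_def)
  also have "submatrix ?B ?H ?H' = submatrix B ?H ?H'"
    using B by (intro submatrix_cong[of _ m m]) auto
  finally have blocks: "submatrix (blockM_part S T) (?L \<union> (+) n ` ?H) (?L' \<union> (+) n ` ?H')
      = four_block_mat (submatrix A ?L ?L') (0\<^sub>m (card ?L) (card ?H')) (submatrix ?LL ?H ?L') (submatrix B ?H ?H')" .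
  have iT: "i ` T \<subseteq> {..<n}" and jS: "j ` S \<subseteq> {..<n}" using ij S T by auto
  have "card ?L = n - card T" "card ?L' = n - card S"
    using card_Diff_subset[OF finite_imageI[OF fin(2)] iT] card_Diff_subset[OF finite_imageI[OF fin(1)] jS]
      card_image[OF inj(1)] card_image[OF inj(2)] by simp_all
  then have "card ?L' = card ?L" using card by simp
  moreover have card_H: "card ?H' = card ?H" using card fin S T by (simp add: card_Diff_subset)
  moreover have "?LL \<in> carrier_mat m n" by (simp add: lower_left_blk_def)
  ultimately have "submatrix A ?L ?L' \<in> carrier_mat (card ?L) (card ?L)"
    "submatrix ?LL ?H ?L' \<in> carrier_mat (card ?H) (card ?L)"
    "submatrix B ?H ?H' \<in> carrier_mat (card ?H) (card ?H)"
    using submatrix_carrier_mat[OF A sub(1,2)] submatrix_carrier_mat[of ?LL m n, OF _ sub(3,2)]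
      submatrix_carrier_mat[OF B sub(3,4)] by simp_all
  then show ?thesis
    unfolding blocks card_H by (intro det_four_block_mat_upper_right_zero) simp_all
qed

lemma blockM_part_alpha_col:
  assumes "k \<in> T" "T \<subseteq> {..<m}" "r < n + m"
  shows "blockM_part S T $$ (r, n + k) = (if r = i k then \<alpha> k else 0)"
proof -
  have "k < m" "i k < n" using assms ij by auto
  then show ?thesis using assms by (auto simp: index_blockM_part index_blockM[OF A B])
qed

lemma blockM_part_beta_row:
  assumes "k \<in> S" "S \<subseteq> {..<m}" "c < n + m"
  shows "blockM_part S T $$ (n + k, c) = (if c = j k then \<beta> k else 0)"
proof -
  have "k < m" "j k < n" using assms ij by auto
  then show ?thesis using assms by (auto simp: index_blockM_part index_blockM[OF A B])
qed

lemma det_blockM_part_eliminate_alpha_cols: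
  assumes T: "T \<subseteq> {..<m}"
  shows "\<exists>e \<in> {1, -1}. det (blockM_part S T) = e * (if inj_on i T
    then (\<Prod>k\<in>T. \<alpha> k) * det (submatrix (blockM_part S T) ({..<n + m} - i ` T) ({..<n + m} - (+) n ` T))
    else 0)"
proof -
  let ?X = "blockM_part S T"
  have X: "?X \<in> carrier_mat (n + m) (n + m)" by (rule blockM_part_carrier_mat)
  have i_less: "i k < n + m" if "k \<in> T" for k using that T ij by auto
  have "\<exists>e \<in> {1, -1}. det (submatrix ?X {..<n + m} {..<n + m}) = e * (if inj_on i T
      then (\<Prod>k\<in>T. ?X $$ (i k, n + k))
        * det (submatrix ?X ({..<n + m} - i ` T) ({..<n + m} - (+) n ` T)) else 0)"
    using T i_less blockM_part_alpha_col finite_subset[OF T]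
    by (intro det_submatrix_eliminate_cols[OF X]) auto
  moreover have "submatrix ?X {..<n + m} {..<n + m} = ?X" using submatrix_lessThan_dims[of ?X] X by simp
  moreover have "(\<Prod>k\<in>T. ?X $$ (i k, n + k)) = (\<Prod>k\<in>T. \<alpha> k)"
    using T by (intro prod.cong refl) (simp add: blockM_part_alpha_col i_less)
  ultimately show ?thesis by (simp only:)
qed

lemma det_blockM_part_eliminate_beta_rows:
  assumes S: "S \<subseteq> {..<m}" and T: "T \<subseteq> {..<m}"
  shows "\<exists>e \<in> {1, -1}.
    det (submatrix (blockM_part S T) ({..<n + m} - i ` T) ({..<n + m} - (+) n ` T)) = e * (if inj_on j S
    then (\<Prod>k\<in>S. \<beta> k) * det (submatrix (blockM_part S T) (({..<n} - i ` T) \<union> (+) n ` ({..<m} - S))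
      (({..<n} - j ` S) \<union> (+) n ` ({..<m} - T)))
    else 0)"
proof -
  let ?X = "blockM_part S T"
  let ?I = "{..<n + m} - i ` T" and ?J = "{..<n + m} - (+) n ` T"
  have X: "?X \<in> carrier_mat (n + m) (n + m)" by (rule blockM_part_carrier_mat)
  have iT: "i ` T \<subseteq> {..<n}" and jS: "j ` S \<subseteq> {..<n}" using ij S T by auto
  have j_less: "j k < n + m" if "k \<in> S" for k using that jS by auto
  have "\<exists>e \<in> {1, -1}. det (submatrix ?X ?I ?J) = e * (if inj_on j S
      then (\<Prod>k\<in>S. ?X $$ (n + k, j k)) * det (submatrix ?X (?I - (+) n ` S) (?J - j ` S)) else 0)"
    using S iT jS blockM_part_beta_row finite_subset[OF S]
    by (intro det_submatrix_eliminate_rows[OF X]) auto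
  moreover have "(\<Prod>k\<in>S. ?X $$ (n + k, j k)) = (\<Prod>k\<in>S. \<beta> k)"
    using S by (intro prod.cong refl) (simp add: blockM_part_beta_row j_less)
  moreover have "?I - (+) n ` S = ({..<n} - i ` T) \<union> (+) n ` ({..<m} - S)"
    by (rule lessThan_add_Diff_shift[OF iT])
  moreover have "?J - j ` S = {..<n + m} - j ` S - (+) n ` T" by blast
  ultimately show ?thesis by (simp only: lessThan_add_Diff_shift[OF jS])
qed

lemma det_blockM_part:
  assumes S: "S \<subseteq> {..<m}" and T: "T \<subseteq> {..<m}" and card: "card S = card T"
  shows "\<exists>e \<in> {1, -1}. det (blockM_part S T)
    = e * (\<Prod>k\<in>T. \<alpha> k) * (\<Prod>k\<in>S. \<beta> k) * B_minor B S T * A_minor A i j S T"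
proof -
  obtain e1 where e1: "e1 \<in> {1, -1}" and det_cols: "det (blockM_part S T) = e1 * (if inj_on i T
      then (\<Prod>k\<in>T. \<alpha> k)
        * det (submatrix (blockM_part S T) ({..<n + m} - i ` T) ({..<n + m} - (+) n ` T))
      else 0)"
    using det_blockM_part_eliminate_alpha_cols[OF T] by blast
  obtain e2 where e2: "e2 \<in> {1, -1}" and det_rows:
    "det (submatrix (blockM_part S T) ({..<n + m} - i ` T) ({..<n + m} - (+) n ` T)) = e2 * (if inj_on j S
      then (\<Prod>k\<in>S. \<beta> k) * det (submatrix (blockM_part S T) (({..<n} - i ` T) \<union> (+) n ` ({..<m} - S))
        (({..<n} - j ` S) \<union> (+) n ` ({..<m} - T)))
      else 0)"
    using det_blockM_part_eliminate_beta_rows[OF S T] by blast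
  have fin: "finite S" "finite T" using S T finite_subset by auto
  have "det (blockM_part S T)
      = (e1 * e2) * (\<Prod>k\<in>T. \<alpha> k) * (\<Prod>k\<in>S. \<beta> k) * B_minor B S T * A_minor A i j S T"
    unfolding det_cols det_rows A_minor_eq[OF A fin card] B_minor_def del_rows_cols_eq_submatrix[OF B]
    using det_blockM_part_remainder[OF S T card] by (simp add: ac_simps)
  moreover have "e1 * e2 \<in> {1, -1}" using e1 e2 by auto
  ultimately show ?thesis by (rule bexI[of _ "e1 * e2"])
qed

lemma det_blockM_part_signs:
  "\<exists>\<epsilon> :: nat set \<Rightarrow> nat set \<Rightarrow> complex. (\<forall>S T. \<epsilon> S T \<in> {1, -1}) \<and>
    (\<forall>S T. S \<subseteq> {..<m} \<and> T \<subseteq> {..<m} \<and> card S = card T \<longrightarrow> det (blockM_part S T)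
      = \<epsilon> S T * (\<Prod>k\<in>T. \<alpha> k) * (\<Prod>k\<in>S. \<beta> k) * B_minor B S T * A_minor A i j S T)"
proof -
  let ?P = "\<lambda>S T e. S \<subseteq> {..<m} \<and> T \<subseteq> {..<m} \<and> card S = card T \<longrightarrow> det (blockM_part S T)
    = e * (\<Prod>k\<in>T. \<alpha> k) * (\<Prod>k\<in>S. \<beta> k) * B_minor B S T * A_minor A i j S T"
  have sign_exists: "\<exists>e. e \<in> {1, -1} \<and> ?P S T e" for S T
  proof (cases "S \<subseteq> {..<m} \<and> T \<subseteq> {..<m} \<and> card S = card T")
    case True
    then show ?thesis using det_blockM_part[of S T] by blast
  qed (intro exI[of _ 1], auto)
  define \<epsilon> where "\<epsilon> S T = (SOME e. e \<in> {1, -1} \<and> ?P S T e)" for S T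
  have sign: "\<epsilon> S T \<in> {1, -1}" and eq: "?P S T (\<epsilon> S T)" for S T
    using someI_ex[OF sign_exists[of S T]] unfolding \<epsilon>_def by blast+
  show ?thesis by (rule exI[of _ \<epsilon>], rule conjI, (intro allI, rule sign), (intro allI, rule eq))
qed

end

theorem lemmaA1:
  fixes A B :: "complex mat" and n m :: nat
    and i j :: "nat \<Rightarrow> nat" and \<alpha> \<beta> :: "nat \<Rightarrow> complex"
  assumes "A \<in> carrier_mat n n" and "B \<in> carrier_mat m m"
    and "\<forall>k<m. i k < n \<and> j k < n"
  shows "\<exists>\<epsilon> :: nat set \<Rightarrow> nat set \<Rightarrow> complex.
           (\<forall>S T. \<epsilon> S T = 1 \<or> \<epsilon> S T = -1) \<and>
           det (blockM A B i j \<alpha> \<beta>) =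
             (\<Sum>(S, T) \<in> {(S, T). S \<subseteq> {..<m} \<and> T \<subseteq> {..<m} \<and> card S = card T}.
                \<epsilon> S T * (\<Prod>k\<in>T. \<alpha> k) * (\<Prod>k\<in>S. \<beta> k) * B_minor B S T * A_minor A i j S T)"
proof -
  let ?Q = "{(S, T). S \<subseteq> {..<m} \<and> T \<subseteq> {..<m} \<and> card S = card T}"
  let ?part = "blockM_part A B m i j \<alpha> \<beta>"
  obtain \<epsilon> where \<epsilon>: "\<forall>S T. \<epsilon> S T \<in> {1, -1}"
    and det_part: "\<forall>S T. S \<subseteq> {..<m} \<and> T \<subseteq> {..<m} \<and> card S = card T \<longrightarrow> det (?part S T)
      = \<epsilon> S T * (\<Prod>k\<in>T. \<alpha> k) * (\<Prod>k\<in>S. \<beta> k) * B_minor B S T * A_minor A i j S T"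
    using det_blockM_part_signs[OF assms, where \<alpha> = \<alpha> and \<beta> = \<beta>] by (elim exE conjE)
  have "det (blockM A B i j \<alpha> \<beta>) = (\<Sum>(S, T) \<in> Pow {..<m} \<times> Pow {..<m}. det (?part S T))"
    by (rule det_blockM_eq_sum_parts[OF assms])
  also have "\<dots> = (\<Sum>(S, T) \<in> ?Q. det (?part S T))"
    by (rule sum.mono_neutral_right) (auto intro: det_blockM_part_eq_0[OF assms])
  also have "\<dots> = (\<Sum>(S, T) \<in> ?Q. \<epsilon> S T * (\<Prod>k\<in>T. \<alpha> k) * (\<Prod>k\<in>S. \<beta> k) * B_minor B S T * A_minor A i j S T)"
    by (rule sum.cong) (auto simp: det_part)
  finally show ?thesis using \<epsilon> by (intro exI[of _ \<epsilon>] conjI) simp_all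
qed

end
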